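(* Let $X$ be a standard one-dimensional Brownian motion starting at $0$, $p$ the atomic proposition with $X(\omega),t\models p$ iff $X_t(\omega)\geq1$, $\tau_p(\omega):=\inf\{t\geq0 : X_t(\omega)\geq1\}$, and $\phi_1:=\Box_{(1,2)}(\Diamond_{(1,4)}p\wedge\lnot\Diamond_{(1,3)}p)$. Suppose $\tau_p(\omega)\geq6$ (and $\tau_p(\omega)<\infty$, which holds almost surely). Then $X(\omega),t\not\models\phi_1$ for $0\leq t<\tau_p(\omega)-5$, $X(\omega),t\models\phi_1$ for $t=\tau_p(\omega)-5$, and $X(\omega),t\not\models\phi_1$ for $\tau_p(\omega)-5<t<\tau_p(\omega)-3$. In particular, $\tau_p(\omega)-5$ is an isolated point of $\{t\geq0 : X(\omega),t\models\phi_1\}$, and this occurs with positive probability.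
   Context: Continuous semantics: $\lnot,\wedge$ classical; $X(\omega),t\models\Diamond_I\phi$ iff $\exists s\in I$ with $X(\omega),t+s\models\phi$; $X(\omega),t\models\Box_I\phi$ iff $\forall s\in I$, $X(\omega),t+s\models\phi$. *)

theory Defs
  imports "HOL-Probability.Probability"
begin

definition std_brownian_motion :: "'a measure \<Rightarrow> (real \<Rightarrow> 'a \<Rightarrow> real) \<Rightarrow> bool" where
  "std_brownian_motion M X \<longleftrightarrow>
     prob_space M \<and>
     (\<forall>t\<ge>0. X t \<in> borel_measurable M) \<and>
     (\<forall>\<omega>\<in>space M. X 0 \<omega> = 0 \<and> continuous_on {0..} (\<lambda>t. X t \<omega>)) \<and>
     (\<forall>s t. 0 \<le> s \<and> s < t \<longrightarrow>
        distributed M lborel (\<lambda>\<omega>. X t \<omega> - X s \<omega>) (normal_density 0 (sqrt (t - s)))) \<and>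
     (\<forall>(ts :: nat \<Rightarrow> real) n. 0 \<le> ts 0 \<and> (\<forall>i<n. ts i < ts (Suc i)) \<longrightarrow>
        prob_space.indep_vars M (\<lambda>_. borel) (\<lambda>i \<omega>. X (ts (Suc i)) \<omega> - X (ts i) \<omega>) {..<n})"

datatype 'p tform =
    Atom 'p
  | Neg "'p tform"
  | Conj "'p tform" "'p tform"
  | Dia "real set" "'p tform"
  | Box "real set" "'p tform"

fun sat :: "('p \<Rightarrow> real \<Rightarrow> bool) \<Rightarrow> (real \<Rightarrow> real) \<Rightarrow> real \<Rightarrow> 'p tform \<Rightarrow> bool" where
  "sat L x t (Atom a) = L a (x t)"
| "sat L x t (Neg \<phi>) = (\<not> sat L x t \<phi>)"
| "sat L x t (Conj \<phi> \<psi>) = (sat L x t \<phi> \<and> sat L x t \<psi>)"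
| "sat L x t (Dia I \<phi>) = (\<exists>s\<in>I. sat L x (t + s) \<phi>)"
| "sat L x t (Box I \<phi>) = (\<forall>s\<in>I. sat L x (t + s) \<phi>)"

definition Lp :: "unit \<Rightarrow> real \<Rightarrow> bool" where
  "Lp a v \<longleftrightarrow> v \<ge> 1"

definition phi1 :: "unit tform" where
  "phi1 = Box {1<..<2} (Conj (Dia {1<..<4} (Atom ())) (Neg (Dia {1<..<3} (Atom ()))))"

text \<open>Hitting time of p (meaningful when the hitting set is nonempty).\<close>
definition tau_p :: "(real \<Rightarrow> 'a \<Rightarrow> real) \<Rightarrow> 'a \<Rightarrow> real" where
  "tau_p X \<omega> = Inf {t. t \<ge> 0 \<and> X t \<omega> \<ge> 1}"

end

(* Let T be the first time X reaches 1, so X < 1 on [0, T) and X T \<ge> 1. The formula phi1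
   at time t asks that for every s in (1, 2) the level 1 is reached in t + s + (1, 4) but not in
   t + s + (1, 3). For t < T - 5 some s puts the whole window t + s + (1, 4) before T; at t = T - 5
   every window t + s + (1, 4) contains T while t + s + (1, 3) stays before T; for
   T - 5 < t < T - 3 some window t + s + (1, 3) contains T. Hence T - 5 is isolated.

   For the probability, choose j such that with probability > 1/2 the path varies by at most 1/2
   between dyadic points of [0, 6] at distance \<le> 2^-j. Each of the 6 * 2^j blocks of length
   2^-j then has, with probability at least some q > 0, oscillation \<le> 1/2 and a net decrease
   (probability 1/2 by symmetry). On the intersection of these blocks the path stays below 1/2 on
   [0, 6] and X 6 \<ge> -3 * 2^j, and an increment \<ge> 3 * 2^j + 1 over [6, 6 + 2^-j] makes it reach 1.
   Independence of increments over disjoint blocks bounds the probability of all this from below by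
   q^(6 * 2^j) times a positive constant, uniformly in the dyadic resolution used to test the
   oscillation, and continuity of measure passes to the limit. *)

theory Submission
  imports Defs
begin

section \<open>First hitting times and the formula phi1\<close>

lemma first_hit_attained:
  fixes x :: "real \<Rightarrow> real"
  assumes "continuous_on {0..} x" and "\<exists>t\<ge>0. c \<le> x t"
  shows "c \<le> x (Inf {t. 0 \<le> t \<and> c \<le> x t})"
proof -
  have "closed ({0..} \<inter> x -` {c..})"
    using assms(1) by (intro continuous_closed_preimage) auto
  moreover have "{0..} \<inter> x -` {c..} = {t. 0 \<le> t \<and> c \<le> x t}"
    by auto
  ultimately have "Inf {t. 0 \<le> t \<and> c \<le> x t} \<in> {t. 0 \<le> t \<and> c \<le> x t}"
    using assms(2) by (intro closed_contains_Inf) (auto simp: bdd_below_def)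
  then show ?thesis by simp
qed

lemma below_first_hit:
  fixes x :: "real \<Rightarrow> real"
  assumes "0 \<le> t" and "t < Inf {t. 0 \<le> t \<and> c \<le> x t}"
  shows "x t < c"
proof (rule ccontr)
  assume "\<not> x t < c"
  then have "Inf {t. 0 \<le> t \<and> c \<le> x t} \<le> t"
    using assms(1) by (intro cInf_lower) (auto simp: bdd_below_def)
  then show False using assms(2) by simp
qed

lemma first_hit_ge_iff:
  fixes x :: "real \<Rightarrow> real"
  assumes "\<exists>t\<ge>0. c \<le> x t"
  shows "b \<le> Inf {t. 0 \<le> t \<and> c \<le> x t} \<longleftrightarrow> (\<forall>t. 0 \<le> t \<and> t < b \<longrightarrow> x t < c)"
proof
  assume "b \<le> Inf {t. 0 \<le> t \<and> c \<le> x t}"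
  then show "\<forall>t. 0 \<le> t \<and> t < b \<longrightarrow> x t < c"
    using below_first_hit by fastforce
next
  assume "\<forall>t. 0 \<le> t \<and> t < b \<longrightarrow> x t < c"
  then show "b \<le> Inf {t. 0 \<le> t \<and> c \<le> x t}"
    using assms by (intro cInf_greatest) (auto simp: not_less[symmetric])
qed

lemma sat_phi1_iff:
  "sat Lp x t phi1 \<longleftrightarrow>
     (\<forall>s\<in>{1<..<2}. (\<exists>u\<in>{1<..<4}. 1 \<le> x (t + s + u)) \<and> (\<forall>u\<in>{1<..<3}. x (t + s + u) < 1))"
  by (auto simp: phi1_def Lp_def not_le)

lemma not_sat_phi1_before_hit:
  assumes below: "\<And>t. 0 \<le> t \<Longrightarrow> t < T \<Longrightarrow> x t < 1" and "0 \<le> t" "t < T - 5"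
  shows "\<not> sat Lp x t phi1"
proof -
  define s where "s = min (3/2) (T - t - 4)"
  have s: "s \<in> {1<..<2}" using assms(2,3) by (auto simp: s_def)
  have "x (t + s + u) < 1" if "u \<in> {1<..<4}" for u
    using that s assms(2,3) by (intro below) (auto simp: s_def)
  then show ?thesis using s unfolding sat_phi1_iff by (meson not_le)
qed

lemma sat_phi1_five_before_hit:
  assumes below: "\<And>t. 0 \<le> t \<Longrightarrow> t < T \<Longrightarrow> x t < 1" and hit: "1 \<le> x T" and "3 \<le> T"
  shows "sat Lp x (T - 5) phi1"
  unfolding sat_phi1_iff
proof (intro ballI conjI)
  fix s :: real assume s: "s \<in> {1<..<2}"
  show "\<exists>u\<in>{1<..<4}. 1 \<le> x (T - 5 + s + u)"
    using s hit by (intro bexI[of _ "5 - s"]) auto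
  show "x (T - 5 + s + u) < 1" if "u \<in> {1<..<3}" for u
    using that s \<open>3 \<le> T\<close> by (intro below) auto
qed

lemma not_sat_phi1_shortly_after:
  assumes hit: "1 \<le> x T" and "T - 5 < t" "t < T - 3"
  shows "\<not> sat Lp x t phi1"
proof -
  define s where "s = (max 1 (T - t - 3) + 2) / 2"
  have "s \<in> {1<..<2}" and "T - t - s \<in> {1<..<3}"
    using assms(2,3) by (auto simp: s_def max_def field_simps)
  moreover have "1 \<le> x (t + s + (T - t - s))" using hit by simp
  ultimately show ?thesis unfolding sat_phi1_iff by (meson not_le)
qed

lemma isolated_sat_phi1:
  assumes below: "\<And>t. 0 \<le> t \<Longrightarrow> t < T \<Longrightarrow> x t < 1" and hit: "1 \<le> x T"
  shows "\<not> (T - 5) islimpt {t. 0 \<le> t \<and> sat Lp x t phi1}"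
proof
  assume "(T - 5) islimpt {t. 0 \<le> t \<and> sat Lp x t phi1}"
  then obtain t where "0 \<le> t" "sat Lp x t phi1" "t \<noteq> T - 5" "dist t (T - 5) < 2"
    unfolding islimpt_approachable by (metis (no_types, lifting) mem_Collect_eq zero_less_numeral)
  then show False
    using not_sat_phi1_before_hit[of T x t] not_sat_phi1_shortly_after[of x T t] below hit
    by (cases "t < T - 5") (auto simp: dist_real_def)
qed

lemma late_first_hit_iff:
  fixes x :: "real \<Rightarrow> real"
  shows "(\<exists>t\<ge>0. c \<le> x t) \<and> b \<le> Inf {t. 0 \<le> t \<and> c \<le> x t} \<longleftrightarrow>
    (\<exists>N::nat. \<exists>t\<in>{0..real N}. c \<le> x t) \<and> \<not> (\<exists>k::nat. \<exists>t\<in>{0..b - 1 / Suc k}. c \<le> x t)"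
proof -
  have hit: "(\<exists>t\<ge>0. c \<le> x t) \<longleftrightarrow> (\<exists>N::nat. \<exists>t\<in>{0..real N}. c \<le> x t)"
  proof
    assume "\<exists>t\<ge>0. c \<le> x t"
    then obtain t where "0 \<le> t" "c \<le> x t" by blast
    moreover obtain N :: nat where "t \<le> real N" using real_arch_simple by blast
    ultimately show "\<exists>N::nat. \<exists>t\<in>{0..real N}. c \<le> x t"
      by (intro exI[of _ N] bexI[of _ t]) auto
  qed auto
  have "(\<forall>t. 0 \<le> t \<and> t < b \<longrightarrow> x t < c) \<longleftrightarrow> \<not> (\<exists>k::nat. \<exists>t\<in>{0..b - 1 / Suc k}. c \<le> x t)"
  proof
    assume below: "\<forall>t. 0 \<le> t \<and> t < b \<longrightarrow> x t < c"
    have "x t < c" if "t \<in> {0..b - 1 / Suc k}" for t and k :: nat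
    proof -
      have "b - 1 / Suc k < b" by simp
      then have "t < b" using that by (simp only: atLeastAtMost_iff) linarith
      then show ?thesis using below that by auto
    qed
    then show "\<not> (\<exists>k::nat. \<exists>t\<in>{0..b - 1 / Suc k}. c \<le> x t)"
      by (auto simp: not_le)
  next
    assume none: "\<not> (\<exists>k::nat. \<exists>t\<in>{0..b - 1 / Suc k}. c \<le> x t)"
    show "\<forall>t. 0 \<le> t \<and> t < b \<longrightarrow> x t < c"
    proof (intro allI impI)
      fix t assume t: "0 \<le> t \<and> t < b"
      then obtain k :: nat where "1 / Suc k < b - t"
        using nat_approx_posE[of "b - t"] by auto
      then have "t \<in> {0..b - 1 / Suc k}" using t by simp
      then show "x t < c" using none by (auto simp: not_le)
    qed
  qed
  then show ?thesis using hit first_hit_ge_iff by blast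
qed

section \<open>Dyadic approximation and measurability of hitting events\<close>

lemma le_on_Icc_if_le_on_dyadics:
  fixes f :: "real \<Rightarrow> real"
  assumes cont: "continuous_on {0..} f"
    and dyadic: "\<And>n a. real a / 2 ^ (j + n) \<le> b \<Longrightarrow> f (real a / 2 ^ (j + n)) \<le> c"
    and t: "0 \<le> t" "t \<le> b"
  shows "f t \<le> c"
proof -
  define u where "u n = real (nat \<lfloor>t * 2 ^ (j + n)\<rfloor>) / 2 ^ (j + n)" for n
  have u_floor: "u n = of_int \<lfloor>t * 2 ^ (j + n)\<rfloor> / 2 ^ (j + n)" for n
    using t by (simp add: u_def)
  have u_le: "u n \<le> t" for n
    unfolding u_floor by (simp add: divide_le_eq)
  have u_ge: "t - (1/2) ^ (j + n) \<le> u n" for n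
  proof -
    have "t - (1/2) ^ (j + n) = (t * 2 ^ (j + n) - 1) / 2 ^ (j + n)"
      by (simp add: field_simps power_one_over)
    also have "\<dots> \<le> u n"
      unfolding u_floor by (intro divide_right_mono) (linarith, simp)
    finally show ?thesis .
  qed
  have "(\<lambda>n. (1/2::real) ^ (n + j)) \<longlonglongrightarrow> 0"
    by (rule LIMSEQ_ignore_initial_segment) (simp add: LIMSEQ_realpow_zero)
  then have "(\<lambda>n. (1/2::real) ^ (j + n)) \<longlonglongrightarrow> 0"
    by (simp only: add.commute)
  from tendsto_diff[OF tendsto_const[of t] this]
  have lower: "(\<lambda>n. t - (1/2) ^ (j + n)) \<longlonglongrightarrow> t"
    by simp
  have u_lim: "u \<longlonglongrightarrow> t"
    by (rule tendsto_sandwich[OF _ _ lower tendsto_const]) (auto intro: always_eventually u_le u_ge)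
  have lim: "(\<lambda>n. f (u n)) \<longlonglongrightarrow> f t"
    using t by (intro continuous_on_tendsto_compose[OF cont u_lim]) (auto simp: u_def)
  have bound: "f (u n) \<le> c" for n
    unfolding u_def using u_le[of n] t by (intro dyadic) (simp add: u_def)
  show ?thesis using LIMSEQ_le_const2[OF lim] bound by blast
qed

lemma dist_dyadic_le:
  fixes a b j n :: nat
  assumes "a \<le> b" "b \<le> a + 2 ^ n"
  shows "dist (real b / 2 ^ (j + n)) (real a / 2 ^ (j + n)) \<le> (1/2) ^ j"
proof -
  have "real a \<le> real b" "real b \<le> real (a + 2 ^ n)"
    using assms by (simp_all only: of_nat_le_iff)
  then have "real b \<le> real a + 2 ^ n"
    by simp
  have "real a / 2 ^ (j + n) \<le> real b / 2 ^ (j + n)"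
    using \<open>real a \<le> real b\<close> by (intro divide_right_mono) auto
  then have "dist (real b / 2 ^ (j + n)) (real a / 2 ^ (j + n)) = (real b - real a) / 2 ^ (j + n)"
    by (simp add: dist_real_def diff_divide_distrib)
  also have "\<dots> \<le> 2 ^ n / 2 ^ (j + n)"
    using \<open>real b \<le> real a + 2 ^ n\<close> by (intro divide_right_mono) auto
  also have "\<dots> = (1/2) ^ j"
    by (simp add: power_add power_one_over)
  finally show ?thesis .
qed

lemma dyadic_rescale: "real (c * 2 ^ n) / 2 ^ (j + n) = real c / (2::real) ^ j"
  by (simp add: power_add)

(* The point a matters only when a = b, where {a..b} \<inter> \<rat> may be empty. *)
lemma exists_ge_iff_dense:
  fixes f :: "real \<Rightarrow> real"
  assumes cont: "continuous_on {a..b} f" and "a \<le> b"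
  shows "(\<exists>t\<in>{a..b}. c \<le> f t) \<longleftrightarrow> (\<forall>i::nat. \<exists>d\<in>insert a ({a..b} \<inter> \<rat>). c - 1 / Suc i < f d)"
proof
  assume "\<exists>t\<in>{a..b}. c \<le> f t"
  then obtain t where t: "t \<in> {a..b}" "c \<le> f t" by blast
  show "\<forall>i::nat. \<exists>d\<in>insert a ({a..b} \<inter> \<rat>). c - 1 / Suc i < f d"
  proof
    fix i :: nat
    show "\<exists>d\<in>insert a ({a..b} \<inter> \<rat>). c - 1 / Suc i < f d"
    proof (cases "t = a")
      case True
      have "c - 1 / Suc i < c" by simp
      then have "c - 1 / Suc i < f a" using t(2) unfolding True by linarith
      then show ?thesis by blast
    next
      case False
      obtain \<delta> where "0 < \<delta>" and \<delta>: "\<And>s. s \<in> {a..b} \<Longrightarrow> dist s t < \<delta> \<Longrightarrow> dist (f s) (f t) < 1 / Suc i"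
        using cont t(1) unfolding continuous_on_iff by (metis of_nat_0_less_iff zero_less_Suc zero_less_divide_1_iff)
      have "max a (t - \<delta>) < t" using False t(1) \<open>0 < \<delta>\<close> by auto
      then obtain r where r: "r \<in> \<rat>" "max a (t - \<delta>) < r" "r < t"
        using Rats_dense_in_real by blast
      then have "r \<in> {a..b}" "dist r t < \<delta>" using t(1) by (auto simp: dist_real_def)
      then have "c - 1 / Suc i < f r" using \<delta> t(2) by (fastforce simp: dist_real_def)
      then show ?thesis using r \<open>r \<in> {a..b}\<close> by blast
    qed
  qed
next
  assume approx: "\<forall>i::nat. \<exists>d\<in>insert a ({a..b} \<inter> \<rat>). c - 1 / Suc i < f d"
  obtain t where t: "t \<in> {a..b}" and max: "\<And>s. s \<in> {a..b} \<Longrightarrow> f s \<le> f t"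
    using continuous_attains_sup[OF compact_Icc _ cont] \<open>a \<le> b\<close> by auto
  have close: "c - 1 / Suc i < f t" for i :: nat
    using approx max \<open>a \<le> b\<close> by (fastforce intro: less_le_trans)
  have "c \<le> f t"
  proof (rule ccontr)
    assume "\<not> c \<le> f t"
    then obtain i :: nat where "1 / Suc i < c - f t"
      using nat_approx_posE[of "c - f t"] by auto
    then show False using close[of i] by simp
  qed
  then show "\<exists>t\<in>{a..b}. c \<le> f t" using t by blast
qed

lemma sets_exists_Icc_ge:
  fixes X :: "real \<Rightarrow> 'a \<Rightarrow> real"
  assumes "a \<le> b" and meas: "\<And>t. t \<in> {a..b} \<Longrightarrow> X t \<in> borel_measurable M"
    and cont: "\<And>\<omega>. \<omega> \<in> space M \<Longrightarrow> continuous_on {a..b} (\<lambda>t. X t \<omega>)"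
  shows "{\<omega>\<in>space M. \<exists>t\<in>{a..b}. c \<le> X t \<omega>} \<in> sets M"
proof -
  define D where "D = insert a ({a..b} \<inter> \<rat>)"
  have "countable D" by (simp add: D_def countable_rat)
  have "D \<subseteq> {a..b}" using \<open>a \<le> b\<close> by (auto simp: D_def)
  have sets_D: "{\<omega>\<in>space M. c - 1 / Suc i < X d \<omega>} \<in> sets M" if "d \<in> D" for d i
  proof -
    have [measurable]: "X d \<in> borel_measurable M" using meas that \<open>D \<subseteq> {a..b}\<close> by blast
    show ?thesis by measurable
  qed
  have iff: "(\<exists>t\<in>{a..b}. c \<le> X t \<omega>) \<longleftrightarrow> (\<forall>i::nat. \<exists>d\<in>D. c - 1 / Suc i < X d \<omega>)"
    if "\<omega> \<in> space M" for \<omega>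
    unfolding D_def using cont[OF that] \<open>a \<le> b\<close> by (rule exists_ge_iff_dense)
  have "{\<omega>\<in>space M. \<exists>t\<in>{a..b}. c \<le> X t \<omega>} =
      {\<omega>\<in>space M. \<forall>i::nat. \<exists>d\<in>D. c - 1 / Suc i < X d \<omega>}"
    by (intro Collect_cong conj_cong refl iff)
  also have "\<dots> = (\<Inter>i::nat. \<Union>d\<in>D. {\<omega>\<in>space M. c - 1 / Suc i < X d \<omega>})"
    by auto
  also have "\<dots> \<in> sets M"
    using sets_D \<open>countable D\<close> by (intro sets.countable_INT sets.countable_UN'') auto
  finally show ?thesis .
qed

lemma (in prob_space) prob_normal_less_0:
  assumes Y: "distributed M lborel Y (normal_density 0 \<sigma>)" and "0 < \<sigma>"
  shows "prob {\<omega>\<in>space M. Y \<omega> < 0} = 1/2"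
proof -
  have Y': "distributed M lborel (\<lambda>\<omega>. - Y \<omega>) (normal_density 0 \<sigma>)"
    using normal_density_affine[OF Y \<open>0 < \<sigma>\<close>, of "-1" 0] by simp
  have [measurable]: "Y \<in> borel_measurable M"
    using Y by (auto dest: distributed_measurable)
  have "emeasure M {\<omega>\<in>space M. Y \<omega> < 0} = emeasure M {\<omega>\<in>space M. - Y \<omega> < 0}"
    using distributed_emeasure[OF Y, of "{..<0}"] distributed_emeasure[OF Y', of "{..<0}"]
    by (simp add: vimage_def Int_def conj_commute)
  then have neg_eq_pos: "prob {\<omega>\<in>space M. Y \<omega> < 0} = prob {\<omega>\<in>space M. 0 < Y \<omega>}"
    by (simp add: emeasure_eq_measure)
  have "AE x in lborel. ennreal (normal_density 0 \<sigma> x) * indicator {0} x = 0"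
    using AE_lborel_singleton[of 0] by eventually_elim simp
  then have "emeasure M {\<omega>\<in>space M. Y \<omega> = 0} = 0"
    using distributed_emeasure[OF Y, of "{0}"]
    by (simp add: nn_integral_0_iff_AE vimage_def Int_def conj_commute)
  then have zero: "prob {\<omega>\<in>space M. Y \<omega> = 0} = 0"
    by (simp add: emeasure_eq_measure)
  have "prob {\<omega>\<in>space M. 0 \<le> Y \<omega>} = prob ({\<omega>\<in>space M. 0 < Y \<omega>} \<union> {\<omega>\<in>space M. Y \<omega> = 0})"
    by (rule arg_cong[where f = prob]) auto
  also have "\<dots> = prob {\<omega>\<in>space M. 0 < Y \<omega>}"
    using zero by (subst finite_measure_Union) auto
  also have "prob {\<omega>\<in>space M. 0 \<le> Y \<omega>} = prob (space M - {\<omega>\<in>space M. Y \<omega> < 0})"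
    by (rule arg_cong[where f = prob]) auto
  also have "\<dots> = 1 - prob {\<omega>\<in>space M. Y \<omega> < 0}"
    by (rule prob_compl) measurable
  finally show ?thesis using neg_eq_pos by simp
qed

lemma (in prob_space) prob_pos_of_positive_density:
  assumes Y: "distributed M lborel Y (\<lambda>x. ennreal (f x))" and pos: "\<And>x. 0 < f x"
    and A: "A \<in> sets borel" "emeasure lborel A \<noteq> 0"
  shows "0 < prob {\<omega>\<in>space M. Y \<omega> \<in> A}"
proof -
  have f [measurable]: "(\<lambda>x. ennreal (f x)) \<in> borel_measurable borel"
    using Y by (auto dest: distributed_borel_measurable)
  have "\<not> (AE x in lborel. x \<notin> A)"
    using A by (subst AE_iff_measurable[of A]) auto
  moreover have "ennreal (f x) * indicator A x \<noteq> 0" if "x \<in> A" for x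
    using pos[of x] that by simp
  ultimately have "\<not> (AE x in lborel. ennreal (f x) * indicator A x = 0)"
    by (metis (mono_tags, lifting) eventually_mono)
  then have "emeasure M {\<omega>\<in>space M. Y \<omega> \<in> A} \<noteq> 0"
    using distributed_emeasure[OF Y, of A] A(1)
    by (simp add: nn_integral_0_iff_AE vimage_def Int_def conj_commute)
  then show ?thesis
    by (simp add: emeasure_eq_measure zero_less_measure_iff)
qed

lemma (in prob_space) prob_Int_ge:
  assumes "A \<in> events" "B \<in> events"
  shows "prob A + prob B - 1 \<le> prob (A \<inter> B)"
  using measure_Un3[of A M B] prob_le_1[of "A \<union> B"] assms by (simp add: fmeasurable_eq_sets)

section \<open>Brownian motion stays below 1 up to time 6 with positive probability\<close>

context
  fixes M :: "'a measure" and X :: "real \<Rightarrow> 'a \<Rightarrow> real"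
  assumes bm: "std_brownian_motion M X"
begin

interpretation prob_space M
  using bm by (simp add: std_brownian_motion_def)

lemma bm_measurable: "0 \<le> t \<Longrightarrow> X t \<in> borel_measurable M"
  using bm by (simp add: std_brownian_motion_def)

lemma bm_measurable_dyadic [measurable]: "X (real a / 2 ^ N) \<in> borel_measurable M"
  by (simp add: bm_measurable)

lemma bm_zero: "\<omega> \<in> space M \<Longrightarrow> X 0 \<omega> = 0"
  using bm by (simp add: std_brownian_motion_def)

lemma bm_continuous: "\<omega> \<in> space M \<Longrightarrow> continuous_on {0..} (\<lambda>t. X t \<omega>)"
  using bm by (simp add: std_brownian_motion_def)

lemma bm_increment_normal:
  "0 \<le> s \<Longrightarrow> s < t \<Longrightarrow> distributed M lborel (\<lambda>\<omega>. X t \<omega> - X s \<omega>) (normal_density 0 (sqrt (t - s)))"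
  using bm by (simp add: std_brownian_motion_def)

lemma bm_increments_indep:
  "0 \<le> ts 0 \<Longrightarrow> (\<And>i. i < n \<Longrightarrow> ts i < ts (Suc i)) \<Longrightarrow>
    indep_vars (\<lambda>_. borel) (\<lambda>i \<omega>. X (ts (Suc i)) \<omega> - X (ts i) \<omega>) {..<n}"
  using bm unfolding std_brownian_motion_def by blast

lemma prob_bm_decrease:
  assumes "0 \<le> s" "s < t"
  shows "prob {\<omega>\<in>space M. X t \<omega> < X s \<omega>} = 1/2"
  using prob_normal_less_0[OF bm_increment_normal[OF assms]] assms by simp

lemma prob_bm_increment_ge_pos:
  assumes "0 \<le> s" "s < t"
  shows "0 < prob {\<omega>\<in>space M. c \<le> X t \<omega> - X s \<omega>}"
proof -
  have "emeasure lborel {c..c+1} \<le> emeasure lborel {c..}"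
    by (rule emeasure_mono) auto
  then have "emeasure lborel {c..} \<noteq> 0" by auto
  then have "0 < prob {\<omega>\<in>space M. X t \<omega> - X s \<omega> \<in> {c..}}"
    using assms by (intro prob_pos_of_positive_density[OF bm_increment_normal[OF assms]])
      (auto simp: normal_density_pos)
  then show ?thesis by simp
qed

lemma indep_vars_bm_blocks:
  fixes ts :: "nat \<Rightarrow> real" and r m :: nat
  assumes "0 \<le> ts 0" "strict_mono ts"
  shows "indep_vars (\<lambda>_. PiM {..r} (\<lambda>_. borel))
    (\<lambda>k \<omega>. \<lambda>a\<in>{..r}. X (ts (k * r + a)) \<omega> - X (ts (k * r)) \<omega>) {..<m}"
proof -
  define d where "d i \<omega> = X (ts (Suc i)) \<omega> - X (ts i) \<omega>" for i \<omega>
  define K where "K k = {k * r..<k * r + r}" for k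
  have "indep_vars (\<lambda>_. borel) d {..<m * r}"
    unfolding d_def using assms by (intro bm_increments_indep) (auto dest: strict_monoD)
  then have "indep_vars (\<lambda>k. PiM (K k) (\<lambda>_. borel)) (\<lambda>k \<omega>. restrict (\<lambda>i. d i \<omega>) (K k)) {..<m}"
  proof (rule indep_vars_restrict)
    show "K k \<subseteq> {..<m * r}" if "k \<in> {..<m}" for k
      using that mult_le_mono1[of "Suc k" m r] by (auto simp: K_def)
    have "i div r = k" if "i \<in> K k" for i k
      using that by (intro div_nat_eqI) (auto simp: K_def mult.commute)
    then show "disjoint_family_on K {..<m}"
      unfolding disjoint_family_on_def by blast
  qed
  then have indep: "indep_vars (\<lambda>_. PiM {..r} (\<lambda>_. borel))
      (\<lambda>k \<omega>. (\<lambda>v. \<lambda>a\<in>{..r}. \<Sum>i\<in>K k. if i < k * r + a then v i else 0) (restrict (\<lambda>i. d i \<omega>) (K k))) {..<m}"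
    by (rule indep_vars_compose2) measurable
  have telescope: "(\<Sum>i\<in>K k. if i < k * r + a then restrict (\<lambda>i. d i \<omega>) (K k) i else 0)
      = X (ts (k * r + a)) \<omega> - X (ts (k * r)) \<omega>" if "a \<le> r" for k a \<omega>
  proof -
    have "(\<Sum>i\<in>K k. if i < k * r + a then restrict (\<lambda>i. d i \<omega>) (K k) i else 0)
        = (\<Sum>i\<in>{i\<in>K k. i < k * r + a}. restrict (\<lambda>i. d i \<omega>) (K k) i)"
      by (rule sum.inter_filter[symmetric]) (simp add: K_def)
    also have "\<dots> = (\<Sum>i = k * r..<k * r + a. d i \<omega>)"
      using that by (intro sum.cong) (auto simp: K_def)
    also have "\<dots> = X (ts (k * r + a)) \<omega> - X (ts (k * r)) \<omega>"
      unfolding d_def by (rule sum_Suc_diff') simp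
    finally show ?thesis .
  qed
  show ?thesis
    using indep by (simp add: telescope cong: restrict_cong)
qed

lemma sets_late_first_hit:
  "{\<omega>\<in>space M. (\<exists>t\<ge>0. 1 \<le> X t \<omega>) \<and> 6 \<le> tau_p X \<omega>} \<in> sets M"
proof -
  have sets_hit: "{\<omega>\<in>space M. \<exists>t\<in>{0..b}. 1 \<le> X t \<omega>} \<in> sets M" if "0 \<le> b" for b :: real
    using that bm_measurable by (intro sets_exists_Icc_ge) (auto intro: continuous_on_subset[OF bm_continuous])
  have "{\<omega>\<in>space M. (\<exists>t\<ge>0. 1 \<le> X t \<omega>) \<and> 6 \<le> tau_p X \<omega>} =
      (\<Union>N::nat. {\<omega>\<in>space M. \<exists>t\<in>{0..real N}. 1 \<le> X t \<omega>}) \<inter>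
      (space M - (\<Union>k::nat. {\<omega>\<in>space M. \<exists>t\<in>{0..6 - 1 / Suc k}. 1 \<le> X t \<omega>}))"
    unfolding tau_p_def using late_first_hit_iff[of 1 "\<lambda>t. X t _" 6] by blast
  also have "\<dots> \<in> sets M"
    using sets_hit by (intro sets.Int sets.Diff sets.countable_UN) (auto simp: field_simps)
  finally show ?thesis .
qed

definition dyadic_modulus :: "nat \<Rightarrow> 'a set" where
  "dyadic_modulus j = {\<omega>\<in>space M. \<forall>n a b. b \<le> 6 * 2 ^ (j + n) \<longrightarrow> a \<le> b \<longrightarrow> b \<le> a + 2 ^ n \<longrightarrow>
     \<bar>X (real b / 2 ^ (j + n)) \<omega> - X (real a / 2 ^ (j + n)) \<omega>\<bar> \<le> 1/2}"

definition calm_block :: "nat \<Rightarrow> nat \<Rightarrow> nat \<Rightarrow> 'a set" where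
  "calm_block j n k = {\<omega>\<in>space M.
     (\<forall>a\<in>{..2 ^ n}. \<forall>b\<in>{..2 ^ n}.
        \<bar>X (real (k * 2 ^ n + b) / 2 ^ (j + n)) \<omega> - X (real (k * 2 ^ n + a) / 2 ^ (j + n)) \<omega>\<bar> \<le> 1/2) \<and>
     X (real (Suc k) / 2 ^ j) \<omega> < X (real k / 2 ^ j) \<omega>}"

(* On good_event the path descends through 6 * 2^j steps of size at most 1/2, so
   X 6 \<ge> -3 * 2^j and this increment is large enough to reach 1. *)
definition overshoot :: "nat \<Rightarrow> 'a set" where
  "overshoot j = {\<omega>\<in>space M. 3 * 2 ^ j + 1 \<le> X (6 + 1 / 2 ^ j) \<omega> - X 6 \<omega>}"

definition good_event :: "nat \<Rightarrow> nat \<Rightarrow> 'a set" where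
  "good_event j n = (\<Inter>k<6 * 2 ^ j. calm_block j n k) \<inter> overshoot j"

lemma sets_dyadic_modulus [measurable]: "dyadic_modulus j \<in> sets M"
  unfolding dyadic_modulus_def by measurable

lemma sets_calm_block [measurable]: "calm_block j n k \<in> sets M"
  unfolding calm_block_def by measurable

lemma sets_overshoot [measurable]: "overshoot j \<in> sets M"
proof -
  have [measurable]: "X 6 \<in> borel_measurable M" "X (6 + 1 / 2 ^ j) \<in> borel_measurable M"
    by (simp_all add: bm_measurable)
  show ?thesis unfolding overshoot_def by measurable
qed

lemma sets_good_event [measurable]: "good_event j n \<in> sets M"
  unfolding good_event_def by (intro sets.Int sets.finite_INT) (auto simp: lessThan_empty_iff)

lemma incseq_dyadic_modulus: "incseq dyadic_modulus"
proof (rule incseq_SucI)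
  fix j
  show "dyadic_modulus j \<subseteq> dyadic_modulus (Suc j)"
  proof
    fix \<omega> assume "\<omega> \<in> dyadic_modulus j"
    then have "\<omega> \<in> space M" and modulus: "\<forall>n a b. b \<le> 6 * 2 ^ (j + n) \<longrightarrow> a \<le> b \<longrightarrow> b \<le> a + 2 ^ n \<longrightarrow>
        \<bar>X (real b / 2 ^ (j + n)) \<omega> - X (real a / 2 ^ (j + n)) \<omega>\<bar> \<le> 1/2"
      by (auto simp: dyadic_modulus_def)
    have "\<bar>X (real b / 2 ^ (Suc j + n)) \<omega> - X (real a / 2 ^ (Suc j + n)) \<omega>\<bar> \<le> 1/2"
      if "b \<le> 6 * 2 ^ (Suc j + n)" "a \<le> b" "b \<le> a + 2 ^ n" for n a b :: nat
    proof -
      have "b \<le> 6 * 2 ^ (j + Suc n) \<longrightarrow> a \<le> b \<longrightarrow> b \<le> a + 2 ^ Suc n \<longrightarrow>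
          \<bar>X (real b / 2 ^ (j + Suc n)) \<omega> - X (real a / 2 ^ (j + Suc n)) \<omega>\<bar> \<le> 1/2"
        using modulus by blast
      then show ?thesis using that by simp
    qed
    then show "\<omega> \<in> dyadic_modulus (Suc j)"
      using \<open>\<omega> \<in> space M\<close> by (simp add: dyadic_modulus_def)
  qed
qed

lemma UN_dyadic_modulus: "(\<Union>j. dyadic_modulus j) = space M"
proof (intro equalityI subsetI)
  fix \<omega> assume \<omega>: "\<omega> \<in> space M"
  have "uniformly_continuous_on {0..6} (\<lambda>t. X t \<omega>)"
    using bm_continuous[OF \<omega>] by (intro compact_uniformly_continuous) (auto intro: continuous_on_subset)
  then obtain \<delta> where "0 < \<delta>"
    and \<delta>: "\<And>s t. s \<in> {0..6} \<Longrightarrow> t \<in> {0..6} \<Longrightarrow> dist s t < \<delta> \<Longrightarrow> dist (X s \<omega>) (X t \<omega>) < 1/2"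
    unfolding uniformly_continuous_on_def by (metis half_gt_zero zero_less_one)
  obtain j where j: "(1/2::real) ^ j < \<delta>"
    using real_arch_pow_inv[OF \<open>0 < \<delta>\<close>, of "1/2"] by auto
  have "\<bar>X (real b / 2 ^ (j + n)) \<omega> - X (real a / 2 ^ (j + n)) \<omega>\<bar> \<le> 1/2"
    if "b \<le> 6 * 2 ^ (j + n)" "a \<le> b" "b \<le> a + 2 ^ n" for n a b :: nat
  proof -
    have "real a \<le> real b" "real b \<le> real (6 * 2 ^ (j + n))"
      using that by (simp_all only: of_nat_le_iff)
    then have "real b / 2 ^ (j + n) \<le> 6" "real a / 2 ^ (j + n) \<le> 6"
      by (simp_all add: divide_le_eq)
    moreover have "dist (real b / 2 ^ (j + n)) (real a / 2 ^ (j + n)) \<le> (1/2) ^ j"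
      using that(2,3) by (rule dist_dyadic_le)
    ultimately have "dist (X (real b / 2 ^ (j + n)) \<omega>) (X (real a / 2 ^ (j + n)) \<omega>) < 1/2"
      using j by (intro \<delta>) auto
    then show ?thesis by (simp add: dist_real_def)
  qed
  then show "\<omega> \<in> (\<Union>j. dyadic_modulus j)"
    using \<omega> unfolding dyadic_modulus_def by blast
qed (auto simp: dyadic_modulus_def)

lemma ex_prob_dyadic_modulus_gt: "\<exists>j. 1/2 < prob (dyadic_modulus j)"
proof -
  have "(\<lambda>j. prob (dyadic_modulus j)) \<longlonglongrightarrow> prob (\<Union>j. dyadic_modulus j)"
    using incseq_dyadic_modulus by (intro finite_Lim_measure_incseq) auto
  then have "(\<lambda>j. prob (dyadic_modulus j)) \<longlonglongrightarrow> 1"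
    by (simp add: UN_dyadic_modulus prob_space)
  from order_tendstoD(1)[OF this, of "1/2"] show ?thesis
    by (auto dest: eventually_happens)
qed

lemma prob_calm_block_ge:
  assumes "k < 6 * 2 ^ j"
  shows "prob (dyadic_modulus j) - 1/2 \<le> prob (calm_block j n k)"
proof -
  define decrease where "decrease = {\<omega>\<in>space M. X (real (Suc k) / 2 ^ j) \<omega> < X (real k / 2 ^ j) \<omega>}"
  have "dyadic_modulus j \<inter> decrease \<subseteq> calm_block j n k"
  proof (intro subsetI)
    fix \<omega> assume \<omega>: "\<omega> \<in> dyadic_modulus j \<inter> decrease"
    have "Suc k * 2 ^ n \<le> 6 * 2 ^ j * 2 ^ n"
      using assms by (intro mult_right_mono) auto
    then have "Suc k * 2 ^ n \<le> 6 * 2 ^ (j + n)"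
      by (simp add: power_add)
    then have osc: "\<bar>X (real b' / 2 ^ (j + n)) \<omega> - X (real a' / 2 ^ (j + n)) \<omega>\<bar> \<le> 1/2"
      if "k * 2 ^ n \<le> a'" "a' \<le> b'" "b' \<le> Suc k * 2 ^ n" for a' b'
      using \<omega> that unfolding dyadic_modulus_def by auto
    have "\<bar>X (real (k * 2 ^ n + b) / 2 ^ (j + n)) \<omega> - X (real (k * 2 ^ n + a) / 2 ^ (j + n)) \<omega>\<bar> \<le> 1/2"
      if "a \<le> 2 ^ n" "b \<le> 2 ^ n" for a b
    proof (cases "a \<le> b")
      case True
      then show ?thesis using that by (intro osc) auto
    next
      case False
      then show ?thesis using that by (subst abs_minus_commute, intro osc) auto
    qed
    then show "\<omega> \<in> calm_block j n k"
      using \<omega> unfolding calm_block_def decrease_def by auto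
  qed
  then have "prob (dyadic_modulus j \<inter> decrease) \<le> prob (calm_block j n k)"
    by (intro finite_measure_mono) auto
  moreover have "prob decrease = 1/2"
    unfolding decrease_def by (intro prob_bm_decrease) (auto intro: divide_strict_right_mono)
  moreover have "prob (dyadic_modulus j) + prob decrease - 1 \<le> prob (dyadic_modulus j \<inter> decrease)"
    unfolding decrease_def by (intro prob_Int_ge) measurable
  ultimately show ?thesis by linarith
qed

definition dyadic_block :: "nat \<Rightarrow> nat \<Rightarrow> nat \<Rightarrow> 'a \<Rightarrow> nat \<Rightarrow> real" where
  "dyadic_block j n k \<omega> =
     (\<lambda>a\<in>{..2 ^ n}. X (real (k * 2 ^ n + a) / 2 ^ (j + n)) \<omega> - X (real k / 2 ^ j) \<omega>)"

lemma indep_vars_dyadic_block: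
  "indep_vars (\<lambda>_. PiM {..2 ^ n} (\<lambda>_. borel)) (dyadic_block j n) {..<m}"
proof -
  have "indep_vars (\<lambda>_. PiM {..2 ^ n} (\<lambda>_. borel))
      (\<lambda>k \<omega>. \<lambda>a\<in>{..2 ^ n}. X (real (k * 2 ^ n + a) / 2 ^ (j + n)) \<omega> - X (real (k * 2 ^ n) / 2 ^ (j + n)) \<omega>)
      {..<m}"
    by (rule indep_vars_bm_blocks[of "\<lambda>i. real i / 2 ^ (j + n)"])
       (auto simp: strict_mono_def divide_strict_right_mono)
  then show ?thesis
    unfolding dyadic_block_def[abs_def] by (simp only: dyadic_rescale)
qed

lemma dyadic_block_last:
  "dyadic_block j n k \<omega> (2 ^ n) = X (real (Suc k) / 2 ^ j) \<omega> - X (real k / 2 ^ j) \<omega>"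
proof -
  have "k * 2 ^ n + 2 ^ n = Suc k * 2 ^ n" by simp
  then show ?thesis
    by (simp only: dyadic_block_def restrict_apply' atMost_iff order_refl if_True dyadic_rescale)
qed

lemma dyadic_block_osc:
  assumes "a \<in> {..2 ^ n}" "b \<in> {..2 ^ n}"
  shows "\<bar>dyadic_block j n k \<omega> b - dyadic_block j n k \<omega> a\<bar> =
    \<bar>X (real (k * 2 ^ n + b) / 2 ^ (j + n)) \<omega> - X (real (k * 2 ^ n + a) / 2 ^ (j + n)) \<omega>\<bar>"
  using assms by (simp add: dyadic_block_def)

lemma prob_good_event:
  "prob (good_event j n) = (\<Prod>k<6 * 2 ^ j. prob (calm_block j n k)) * prob (overshoot j)"
proof -
  define m :: nat where "m = 6 * 2 ^ j"
  define A :: "nat \<Rightarrow> (nat \<Rightarrow> real) set" where "A k = {w \<in> space (PiM {..2 ^ n} (\<lambda>_. borel)).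
    if k < m then (\<forall>a\<in>{..2 ^ n}. \<forall>b\<in>{..2 ^ n}. \<bar>w b - w a\<bar> \<le> 1/2) \<and> w (2 ^ n) < 0
    else 3 * 2 ^ j + 1 \<le> w (2 ^ n)}" for k
  have "A k \<in> sets (PiM {..2 ^ n} (\<lambda>_. borel))" for k
    unfolding A_def by (cases "k < m") measurable
  then have product: "prob (\<Inter>k\<in>{..<Suc m}. dyadic_block j n k -` A k \<inter> space M) =
      (\<Prod>k\<in>{..<Suc m}. prob (dyadic_block j n k -` A k \<inter> space M))"
    by (intro indep_varsD[OF indep_vars_dyadic_block]) auto
  have range: "dyadic_block j n k \<in> space M \<rightarrow> space (PiM {..2 ^ n} (\<lambda>_. borel))" for k
    by (simp add: dyadic_block_def space_PiM)
  have calm_preimage: "dyadic_block j n k -` A k \<inter> space M = calm_block j n k" if "k < m" for k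
  proof -
    have "dyadic_block j n k -` A k \<inter> space M = {\<omega>\<in>space M.
        (\<forall>a\<in>{..2 ^ n}. \<forall>b\<in>{..2 ^ n}. \<bar>dyadic_block j n k \<omega> b - dyadic_block j n k \<omega> a\<bar> \<le> 1/2) \<and>
        dyadic_block j n k \<omega> (2 ^ n) < 0}"
      using that range by (auto simp: A_def Pi_iff)
    also have "\<dots> = calm_block j n k"
      unfolding calm_block_def dyadic_block_last
      by (simp only: dyadic_block_osc diff_less_0_iff_less cong: ball_cong)
    finally show ?thesis .
  qed
  have overshoot_preimage: "dyadic_block j n m -` A m \<inter> space M = overshoot j"
  proof -
    have "real (Suc m) / 2 ^ j = 6 + 1 / 2 ^ j" "real m / 2 ^ j = 6"
      by (simp_all add: m_def field_simps)
    then show ?thesis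
      using range by (auto simp: A_def overshoot_def dyadic_block_last Pi_iff)
  qed
  have "(\<Inter>k\<in>{..<Suc m}. dyadic_block j n k -` A k \<inter> space M) = good_event j n"
    unfolding good_event_def m_def[symmetric] lessThan_Suc INT_insert overshoot_preimage
    using calm_preimage by (simp add: Int_commute)
  with product show ?thesis
    unfolding m_def[symmetric] prod.lessThan_Suc overshoot_preimage using calm_preimage by simp
qed

lemma decseq_good_event: "decseq (good_event j)"
proof (rule decseq_SucI)
  fix n
  have rescale: "real (k * 2 ^ Suc n + 2 * a) / 2 ^ (j + Suc n) = real (k * 2 ^ n + a) / 2 ^ (j + n)"
    for k a :: nat
    by (simp add: field_simps)
  have "calm_block j (Suc n) k \<subseteq> calm_block j n k" for k
  proof
    fix \<omega> assume "\<omega> \<in> calm_block j (Suc n) k"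
    then have fine: "\<forall>a\<in>{..2 ^ Suc n}. \<forall>b\<in>{..2 ^ Suc n}.
        \<bar>X (real (k * 2 ^ Suc n + b) / 2 ^ (j + Suc n)) \<omega> - X (real (k * 2 ^ Suc n + a) / 2 ^ (j + Suc n)) \<omega>\<bar> \<le> 1/2"
      and rest: "\<omega> \<in> space M" "X (real (Suc k) / 2 ^ j) \<omega> < X (real k / 2 ^ j) \<omega>"
      by (auto simp: calm_block_def)
    have "\<bar>X (real (k * 2 ^ n + b) / 2 ^ (j + n)) \<omega> - X (real (k * 2 ^ n + a) / 2 ^ (j + n)) \<omega>\<bar> \<le> 1/2"
      if "a \<in> {..2 ^ n}" "b \<in> {..2 ^ n}" for a b
    proof -
      have "2 * a \<in> {..2 ^ Suc n}" "2 * b \<in> {..2 ^ Suc n}" using that by auto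
      from fine[rule_format, OF this] show ?thesis unfolding rescale .
    qed
    then show "\<omega> \<in> calm_block j n k"
      using rest by (simp add: calm_block_def)
  qed
  then show "good_event j (Suc n) \<subseteq> good_event j n"
    unfolding good_event_def by blast
qed

lemma good_event_skeleton:
  assumes \<omega>: "\<omega> \<in> good_event j n" and "k \<le> 6 * 2 ^ j"
  shows "- real k / 2 \<le> X (real k / 2 ^ j) \<omega> \<and> X (real k / 2 ^ j) \<omega> \<le> 0"
  using \<open>k \<le> 6 * 2 ^ j\<close>
proof (induction k)
  case 0
  have "\<omega> \<in> space M" using \<omega> by (auto simp: good_event_def overshoot_def)
  then show ?case by (simp add: bm_zero)
next
  case (Suc k)
  then have "\<omega> \<in> calm_block j n k" using \<omega> by (auto simp: good_event_def)
  then have "\<bar>X (real (k * 2 ^ n + 2 ^ n) / 2 ^ (j + n)) \<omega> - X (real (k * 2 ^ n + 0) / 2 ^ (j + n)) \<omega>\<bar> \<le> 1/2"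
      and "X (real (Suc k) / 2 ^ j) \<omega> < X (real k / 2 ^ j) \<omega>"
    unfolding calm_block_def by blast+
  moreover have "k * 2 ^ n + 2 ^ n = Suc k * 2 ^ n" "k * 2 ^ n + 0 = k * 2 ^ n"
    by simp_all
  ultimately show ?case
    using Suc by (simp only: dyadic_rescale) (simp add: abs_le_iff)
qed

lemma good_event_dyadic_le:
  assumes \<omega>: "\<omega> \<in> good_event j n" and "real a / 2 ^ (j + n) \<le> 6"
  shows "X (real a / 2 ^ (j + n)) \<omega> \<le> 1/2"
proof -
  define k where "k = a div 2 ^ n"
  have "real a \<le> real (6 * 2 ^ j * 2 ^ n)"
    using assms(2) by (simp add: divide_le_eq power_add)
  then have "a \<le> 6 * 2 ^ j * 2 ^ n"
    by (simp only: of_nat_le_iff)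
  then have "k \<le> 6 * 2 ^ j"
    unfolding k_def by (metis div_le_mono nonzero_mult_div_cancel_right power_not_zero zero_neq_numeral)
  have a: "a = k * 2 ^ n + a mod 2 ^ n"
    unfolding k_def by (rule div_mult_mod_eq[symmetric])
  show ?thesis
  proof (cases "k = 6 * 2 ^ j")
    case True
    then have "a = k * 2 ^ n"
      using \<open>a \<le> 6 * 2 ^ j * 2 ^ n\<close> a unfolding True by linarith
    then have "real a / 2 ^ (j + n) = real k / 2 ^ j"
      by (simp only: dyadic_rescale)
    then show ?thesis
      using good_event_skeleton[OF \<omega> \<open>k \<le> _\<close>] by simp
  next
    case False
    then have "\<omega> \<in> calm_block j n k"
      using \<omega> \<open>k \<le> 6 * 2 ^ j\<close> by (auto simp: good_event_def)
    moreover have "a mod 2 ^ n \<in> {..2 ^ n}" "(0::nat) \<in> {..2 ^ n}"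
      by (simp_all add: less_imp_le)
    ultimately have "\<bar>X (real (k * 2 ^ n + a mod 2 ^ n) / 2 ^ (j + n)) \<omega> - X (real (k * 2 ^ n + 0) / 2 ^ (j + n)) \<omega>\<bar> \<le> 1/2"
      unfolding calm_block_def by blast
    then have "\<bar>X (real a / 2 ^ (j + n)) \<omega> - X (real k / 2 ^ j) \<omega>\<bar> \<le> 1/2"
      by (simp only: a[symmetric] add_0_right dyadic_rescale)
    then have "X (real a / 2 ^ (j + n)) \<omega> - X (real k / 2 ^ j) \<omega> \<le> 1/2"
      by (rule abs_le_D1)
    then show ?thesis
      using good_event_skeleton[OF \<omega> \<open>k \<le> _\<close>] by linarith
  qed
qed

lemma INT_good_event_subset_late_first_hit:
  "(\<Inter>n. good_event j n) \<subseteq> {\<omega>\<in>space M. (\<exists>t\<ge>0. 1 \<le> X t \<omega>) \<and> 6 \<le> tau_p X \<omega>}"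
proof
  fix \<omega> assume "\<omega> \<in> (\<Inter>n. good_event j n)"
  then have \<omega>: "\<omega> \<in> good_event j n" for n by blast
  then have "\<omega> \<in> overshoot j" by (simp add: good_event_def)
  then have space: "\<omega> \<in> space M" and jump: "3 * 2 ^ j + 1 \<le> X (6 + 1 / 2 ^ j) \<omega> - X 6 \<omega>"
    by (simp_all add: overshoot_def)
  have "X t \<omega> \<le> 1/2" if "0 \<le> t" "t \<le> 6" for t
    using bm_continuous[OF space] good_event_dyadic_le[OF \<omega>] that by (rule le_on_Icc_if_le_on_dyadics)
  then have below: "\<forall>t. 0 \<le> t \<and> t < 6 \<longrightarrow> X t \<omega> < 1"
    by fastforce
  have "- 3 * 2 ^ j \<le> X 6 \<omega>"
    using good_event_skeleton[OF \<omega>, of "6 * 2 ^ j"] by simp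
  then have "1 \<le> X (6 + 1 / 2 ^ j) \<omega>"
    using jump by linarith
  then have hit: "\<exists>t\<ge>0. 1 \<le> X t \<omega>"
    by (intro exI[of _ "6 + 1 / 2 ^ j"]) auto
  then have "6 \<le> tau_p X \<omega>"
    unfolding tau_p_def using first_hit_ge_iff[OF hit, of 6] below by simp
  then show "\<omega> \<in> {\<omega>\<in>space M. (\<exists>t\<ge>0. 1 \<le> X t \<omega>) \<and> 6 \<le> tau_p X \<omega>}"
    using space hit by simp
qed

lemma prob_late_first_hit_pos:
  "0 < prob {\<omega>\<in>space M. (\<exists>t\<ge>0. 1 \<le> X t \<omega>) \<and> 6 \<le> tau_p X \<omega>}"
proof -
  obtain j where j: "1/2 < prob (dyadic_modulus j)"
    using ex_prob_dyadic_modulus_gt by blast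
  define q where "q = prob (dyadic_modulus j) - 1/2"
  have "0 < prob (overshoot j)"
    unfolding overshoot_def by (intro prob_bm_increment_ge_pos) auto
  then have pos: "0 < q ^ (6 * 2 ^ j) * prob (overshoot j)"
    using j by (simp add: q_def)
  have "q ^ (6 * 2 ^ j) * prob (overshoot j) \<le> prob (good_event j n)" for n
  proof -
    have "q ^ (6 * 2 ^ j) = (\<Prod>k\<in>{..<6 * 2 ^ j::nat}. q)"
      by simp
    also have "\<dots> \<le> (\<Prod>k<6 * 2 ^ j. prob (calm_block j n k))"
      using prob_calm_block_ge j by (intro prod_mono) (auto simp: q_def)
    finally show ?thesis
      unfolding prob_good_event by (intro mult_right_mono) auto
  qed
  then have "q ^ (6 * 2 ^ j) * prob (overshoot j) \<le> prob (\<Inter>n. good_event j n)"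
    using decseq_good_event by (intro LIMSEQ_le_const[OF finite_Lim_measure_decseq]) auto
  also have "\<dots> \<le> prob {\<omega>\<in>space M. (\<exists>t\<ge>0. 1 \<le> X t \<omega>) \<and> 6 \<le> tau_p X \<omega>}"
    using INT_good_event_subset_late_first_hit sets_late_first_hit by (intro finite_measure_mono)
  finally show ?thesis using pos by linarith
qed

end

theorem lemma5p2:
  fixes M :: "'a measure" and X :: "real \<Rightarrow> 'a \<Rightarrow> real"
  assumes "std_brownian_motion M X"
  shows "(\<forall>\<omega>\<in>space M. (\<exists>t\<ge>0. X t \<omega> \<ge> 1) \<and> tau_p X \<omega> \<ge> 6 \<longrightarrow>
            (\<forall>t. 0 \<le> t \<and> t < tau_p X \<omega> - 5 \<longrightarrow> \<not> sat Lp (\<lambda>s. X s \<omega>) t phi1) \<and>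
            sat Lp (\<lambda>s. X s \<omega>) (tau_p X \<omega> - 5) phi1 \<and>
            (\<forall>t. tau_p X \<omega> - 5 < t \<and> t < tau_p X \<omega> - 3 \<longrightarrow> \<not> sat Lp (\<lambda>s. X s \<omega>) t phi1) \<and>
            \<not> (tau_p X \<omega> - 5) islimpt {t. t \<ge> 0 \<and> sat Lp (\<lambda>s. X s \<omega>) t phi1})
       \<and> measure M {\<omega>\<in>space M. (\<exists>t\<ge>0. X t \<omega> \<ge> 1) \<and> tau_p X \<omega> \<ge> 6} > 0"
proof (intro conjI ballI impI allI)
  fix \<omega> assume \<omega>: "\<omega> \<in> space M" and late: "(\<exists>t\<ge>0. X t \<omega> \<ge> 1) \<and> tau_p X \<omega> \<ge> 6"
  have below: "X t \<omega> < 1" if "0 \<le> t" "t < tau_p X \<omega>" for t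
    using that unfolding tau_p_def by (rule below_first_hit)
  have hit: "1 \<le> X (tau_p X \<omega>) \<omega>"
    using bm_continuous[OF assms \<omega>] late unfolding tau_p_def by (intro first_hit_attained) auto
  show "\<not> sat Lp (\<lambda>s. X s \<omega>) t phi1" if "0 \<le> t \<and> t < tau_p X \<omega> - 5" for t
    using below that by (intro not_sat_phi1_before_hit) auto
  show "sat Lp (\<lambda>s. X s \<omega>) (tau_p X \<omega> - 5) phi1"
    using below hit late by (intro sat_phi1_five_before_hit) auto
  show "\<not> sat Lp (\<lambda>s. X s \<omega>) t phi1" if "tau_p X \<omega> - 5 < t \<and> t < tau_p X \<omega> - 3" for t
    using hit that by (intro not_sat_phi1_shortly_after) auto
  show "\<not> (tau_p X \<omega> - 5) islimpt {t. t \<ge> 0 \<and> sat Lp (\<lambda>s. X s \<omega>) t phi1}"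
    using below hit by (intro isolated_sat_phi1) auto
next
  show "measure M {\<omega>\<in>space M. (\<exists>t\<ge>0. X t \<omega> \<ge> 1) \<and> tau_p X \<omega> \<ge> 6} > 0"
    using prob_late_first_hit_pos[OF assms] by simp
qed

end
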